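(* Let $\varepsilon>0$, $\beta,\delta\in(0,1)$, and let $G$ be a graph with at least one edge. Run: set $T=-\frac8\varepsilon\ln\frac4\beta$, $\tilde T=T+\mathrm{Lap}(4/\varepsilon)$; for $\tau=1,2,4,8,\dots$ compute $\tilde Q_\tau=Q_{\mathrm{LP\text{-}Del\text{-}N}}(G,\tau)+\mathrm{Lap}(4/\varepsilon)$ and stop at the first $\tau$ with $\tilde Q_\tau>\tilde T$; output $$\tau^*=3\tau+3|Q_{\mathrm{LP\text{-}Del\text{-}N}}(G,\tau)|+\mathrm{Lap}(6/\varepsilon)+\frac6\varepsilon\ln\max\Big(\frac1\delta,\frac2\beta\Big)+1.$$ Then with probability at least $1-\beta$, $$\tau^*\le6\deg(G)+\frac{24}\varepsilon\ln\log(4\deg(G))+\frac{48}\varepsilon\ln\frac4\beta+\frac{12}\varepsilon\ln\max\Big(\frac1\delta,\frac2\beta\Big)+1$$ and $$N_{\tau^*}(G)\le\frac{24}\varepsilon\ln\log(4\deg(G))+\frac{48}\varepsilon\ln\frac4\beta.$$ Furthermore, with probability at least $1-\delta$, $\tau^*+N_{\tau^*}(G)\le2\tau^*$.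
   Context: Graphs are finite, simple, undirected; $\deg(G)$ is the maximum degree; $E(v)$ is the set of edges at $v$; $N_t(G)$ is the number of nodes of degree at least $t$. $Q_{\mathrm{LP\text{-}Del\text{-}N}}(G,\tau)$ is the optimal value of the LP: maximize $-\sum_{v}x_v$ subject to $y_e\ge1-x_{v'}-x_{v''}$ for every edge $e=(v',v'')$, $\sum_{e\in E(v)}y_e\le\tau$ for every node $v$, and $x_v,y_e\in[0,1]$. $\mathrm{Lap}(b)$ has density $\frac1{2b}e^{-|x|/b}$; all draws are independent. $\ln$ is the natural logarithm and $\log$ the base-2 logarithm. *)

theory Defs
  imports "HOL-Probability.Probability"
begin

definition simple_graph :: "'a set \<Rightarrow> 'a set set \<Rightarrow> bool" where
  "simple_graph V E \<longleftrightarrow> finite V \<and>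
     (\<forall>e\<in>E. \<exists>u w. e = {u, w} \<and> u \<noteq> w \<and> u \<in> V \<and> w \<in> V)"

definition edges_at :: "'a set set \<Rightarrow> 'a \<Rightarrow> 'a set set" where
  "edges_at E v = {e\<in>E. v \<in> e}"

definition vdeg :: "'a set set \<Rightarrow> 'a \<Rightarrow> nat" where
  "vdeg E v = card (edges_at E v)"

definition max_deg :: "'a set \<Rightarrow> 'a set set \<Rightarrow> nat" where
  "max_deg V E = Max (vdeg E ` V)"

definition N_ge :: "'a set \<Rightarrow> 'a set set \<Rightarrow> real \<Rightarrow> nat" where
  "N_ge V E t = card {v\<in>V. real (vdeg E v) \<ge> t}"

definition lp_feasible :: "'a set \<Rightarrow> 'a set set \<Rightarrow> real \<Rightarrow> ('a \<Rightarrow> real) \<Rightarrow> ('a set \<Rightarrow> real) \<Rightarrow> bool" where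
  "lp_feasible V E \<tau> x y \<longleftrightarrow>
     (\<forall>v\<in>V. 0 \<le> x v \<and> x v \<le> 1) \<and>
     (\<forall>e\<in>E. 0 \<le> y e \<and> y e \<le> 1) \<and>
     (\<forall>e\<in>E. \<forall>u w. e = {u, w} \<and> u \<noteq> w \<longrightarrow> y e \<ge> 1 - x u - x w) \<and>
     (\<forall>v\<in>V. (\<Sum>e\<in>edges_at E v. y e) \<le> \<tau>)"

definition Q_LP :: "'a set \<Rightarrow> 'a set set \<Rightarrow> real \<Rightarrow> real" where
  "Q_LP V E \<tau> = Sup {- (\<Sum>v\<in>V. x v) | x y. lp_feasible V E \<tau> x y}"

text \<open>Indices of the independent Laplace noises used by the algorithm:
  NT = threshold noise, NQ k = noise for the query at tau = 2^k, NF = final noise.\<close>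
datatype noise_idx = NT | NQ nat | NF

definition laplace_density :: "real \<Rightarrow> real \<Rightarrow> ennreal" where
  "laplace_density b x = ennreal (1 / (2 * b) * exp (- \<bar>x\<bar> / b))"

definition alg_T :: "real \<Rightarrow> real \<Rightarrow> real" where
  "alg_T \<epsilon> \<beta> = - (8 / \<epsilon>) * ln (4 / \<beta>)"

definition alg_passes :: "'a set \<Rightarrow> 'a set set \<Rightarrow> real \<Rightarrow> real \<Rightarrow> (noise_idx \<Rightarrow> real) \<Rightarrow> nat \<Rightarrow> bool" where
  "alg_passes V E \<epsilon> \<beta> z k \<longleftrightarrow> Q_LP V E (2 ^ k) + z (NQ k) > alg_T \<epsilon> \<beta> + z NT"

definition alg_stops_at :: "'a set \<Rightarrow> 'a set set \<Rightarrow> real \<Rightarrow> real \<Rightarrow> (noise_idx \<Rightarrow> real) \<Rightarrow> nat \<Rightarrow> bool" where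
  "alg_stops_at V E \<epsilon> \<beta> z k \<longleftrightarrow> alg_passes V E \<epsilon> \<beta> z k \<and> (\<forall>j<k. \<not> alg_passes V E \<epsilon> \<beta> z j)"

definition alg_output :: "'a set \<Rightarrow> 'a set set \<Rightarrow> real \<Rightarrow> real \<Rightarrow> real \<Rightarrow> (noise_idx \<Rightarrow> real) \<Rightarrow> nat \<Rightarrow> real" where
  "alg_output V E \<epsilon> \<beta> \<delta> z k =
     3 * 2 ^ k + 3 * \<bar>Q_LP V E (2 ^ k)\<bar> + z NF + 6 / \<epsilon> * ln (max (1 / \<delta>) (2 / \<beta>)) + 1"

end

theory Submission
  imports Defs "HOL-Real_Asymp.Real_Asymp"
begin

(* In a feasible solution (x, y) of LP-Del-N(G, tau) the edges at a vertex v of degree d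
   cost at least d (1 - x v) - sum x and at most tau, so every vertex of degree above
   3 (tau + sum x) has x v >= 1/3.  With a near-optimal x this gives N_t(G) <= 3 |Q(G, tau)|
   for all t >= 3 tau + 3 |Q(G, tau)| + 1, and the output exceeds this threshold unless the
   final noise is very negative.

   The search stops: from tau >= deg(G) on, every query value is 0, so the independent query
   noises eventually beat the threshold noise.  With probability 1 - beta all noises up to the
   first power of two above deg(G) lie within their ln(1/beta)-scale tails; then the search
   stops at some tau < 2 deg(G), and the stopping rule bounds |Q(G, tau)|, hence the output and
   N at the output, by the noise scale. *)

section \<open>Vertex degrees and the LP relaxation\<close>

definition neighbours :: "'a set \<Rightarrow> 'a set set \<Rightarrow> 'a \<Rightarrow> 'a set" where
  "neighbours V E v = {w\<in>V. w \<noteq> v \<and> {v, w} \<in> E}"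

lemma simple_graph_finite_vertices: "simple_graph V E \<Longrightarrow> finite V"
  by (simp add: simple_graph_def)

lemma simple_graph_finite_edges:
  assumes "simple_graph V E"
  shows "finite E"
proof -
  have "E \<subseteq> Pow V"
    using assms by (force simp: simple_graph_def)
  then show ?thesis
    using simple_graph_finite_vertices[OF assms] by (rule finite_subset[OF _ finite_Pow_iff[THEN iffD2]])
qed

lemma bij_betw_neighbours_edges_at:
  assumes "simple_graph V E"
  shows "bij_betw (\<lambda>w. {v, w}) (neighbours V E v) (edges_at E v)"
proof (rule bij_betw_imageI)
  show "inj_on (\<lambda>w. {v, w}) (neighbours V E v)"
    by (auto simp: inj_on_def neighbours_def doubleton_eq_iff)
  show "(\<lambda>w. {v, w}) ` neighbours V E v = edges_at E v"
  proof (intro equalityI subsetI)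
    fix e assume "e \<in> edges_at E v"
    then obtain u w where "e \<in> E" "v \<in> e" "e = {u, w}" "u \<noteq> w" "u \<in> V" "w \<in> V"
      using assms by (force simp: simple_graph_def edges_at_def)
    then show "e \<in> (\<lambda>w. {v, w}) ` neighbours V E v"
      by (auto simp: neighbours_def insert_commute)
  qed (auto simp: neighbours_def edges_at_def)
qed

lemma vdeg_eq_card_neighbours: "simple_graph V E \<Longrightarrow> vdeg E v = card (neighbours V E v)"
  unfolding vdeg_def by (metis bij_betw_same_card bij_betw_neighbours_edges_at)

lemma vdeg_le_max_deg: "simple_graph V E \<Longrightarrow> v \<in> V \<Longrightarrow> vdeg E v \<le> max_deg V E"
  by (simp add: max_deg_def simple_graph_finite_vertices)

lemma max_deg_pos:
  assumes "simple_graph V E" "E \<noteq> {}"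
  shows "0 < max_deg V E"
proof -
  obtain u w where "{u, w} \<in> E" "u \<in> V"
    using assms by (force simp: simple_graph_def)
  then have "edges_at E u \<noteq> {}" "finite (edges_at E u)"
    using simple_graph_finite_edges[OF assms(1)] by (auto simp: edges_at_def)
  then have "0 < vdeg E u"
    by (simp add: vdeg_def card_gt_0_iff)
  with vdeg_le_max_deg[OF assms(1) \<open>u \<in> V\<close>] show ?thesis
    by linarith
qed

lemma lp_feasible_degree_bound:
  assumes G: "simple_graph V E" and feas: "lp_feasible V E \<tau> x y" and v: "v \<in> V"
  shows "real (vdeg E v) * (1 - x v) \<le> \<tau> + (\<Sum>w\<in>V. x w)"
proof -
  let ?N = "neighbours V E v"
  have x01: "\<And>w. w \<in> V \<Longrightarrow> 0 \<le> x w \<and> x w \<le> 1"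
    using feas by (simp add: lp_feasible_def)
  have "?N \<subseteq> V" "finite V"
    using G by (auto simp: neighbours_def simple_graph_finite_vertices)
  then have "(\<Sum>w\<in>?N. x w) \<le> (\<Sum>w\<in>V. x w)"
    using x01 by (intro sum_mono2) auto
  then have "real (vdeg E v) * (1 - x v) - (\<Sum>w\<in>V. x w) \<le> (\<Sum>w\<in>?N. 1 - x v - x w)"
    by (simp add: vdeg_eq_card_neighbours[OF G] sum_subtractf)
  also have "\<dots> \<le> (\<Sum>w\<in>?N. y {v, w})"
    using feas by (intro sum_mono) (auto simp: lp_feasible_def neighbours_def)
  also have "\<dots> = (\<Sum>e\<in>edges_at E v. y e)"
    using bij_betw_neighbours_edges_at[OF G] by (rule sum.reindex_bij_betw)
  also have "\<dots> \<le> \<tau>"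
    using feas v by (simp add: lp_feasible_def)
  finally show ?thesis
    by simp
qed

lemma N_ge_le_lp_feasible:
  assumes G: "simple_graph V E" and feas: "lp_feasible V E \<tau> x y"
    and t: "3 * (\<tau> + (\<Sum>w\<in>V. x w)) < t"
  shows "real (N_ge V E t) \<le> 3 * (\<Sum>w\<in>V. x w)"
proof -
  let ?H = "{v\<in>V. t \<le> real (vdeg E v)}"
  have x01: "\<And>w. w \<in> V \<Longrightarrow> 0 \<le> x w \<and> x w \<le> 1"
    using feas by (simp add: lp_feasible_def)
  have heavy: "1 \<le> 3 * x v" if "v \<in> ?H" for v
  proof -
    have "real (vdeg E v) * (1 - x v) < real (vdeg E v) / 3"
      using lp_feasible_degree_bound[OF G feas] that t by fastforce
    then have less: "real (vdeg E v) * (1 - x v) < real (vdeg E v) * (1 / 3)"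
      by simp
    then have "0 < real (vdeg E v)"
      by (cases "vdeg E v = 0") auto
    with less show ?thesis
      by (simp add: mult_less_cancel_left_pos)
  qed
  have "finite V"
    using G by (rule simple_graph_finite_vertices)
  then have "real (N_ge V E t) = (\<Sum>v\<in>?H. 1)"
    by (simp add: N_ge_def)
  also have "\<dots> \<le> (\<Sum>v\<in>?H. 3 * x v)"
    using heavy by (intro sum_mono) auto
  also have "\<dots> \<le> (\<Sum>v\<in>V. 3 * x v)"
    using \<open>finite V\<close> x01 by (intro sum_mono2) auto
  finally show ?thesis
    by (simp add: sum_distrib_left)
qed

lemma lp_feasible_ones: "0 \<le> \<tau> \<Longrightarrow> lp_feasible V E \<tau> (\<lambda>_. 1) (\<lambda>_. 0)"
  by (simp add: lp_feasible_def)

lemma lp_feasible_sum_nonneg: "lp_feasible V E \<tau> x y \<Longrightarrow> 0 \<le> (\<Sum>v\<in>V. x v)"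
  by (auto simp: lp_feasible_def intro: sum_nonneg)

lemma Q_LP_upper:
  assumes "lp_feasible V E \<tau> x y"
  shows "- (\<Sum>v\<in>V. x v) \<le> Q_LP V E \<tau>"
  unfolding Q_LP_def
proof (rule cSup_upper)
  show "bdd_above {- (\<Sum>v\<in>V. x v) | x y. lp_feasible V E \<tau> x y}"
    by (rule bdd_aboveI[of _ 0]) (auto dest: lp_feasible_sum_nonneg)
qed (use assms in blast)

lemma Q_LP_nonpos:
  assumes "0 \<le> \<tau>"
  shows "Q_LP V E \<tau> \<le> 0"
  unfolding Q_LP_def
proof (rule cSup_least)
  show "{- (\<Sum>v\<in>V. x v) | x y. lp_feasible V E \<tau> x y} \<noteq> {}"
    using lp_feasible_ones[OF assms] by blast
qed (auto dest: lp_feasible_sum_nonneg)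

lemma Q_LP_approx:
  assumes "0 \<le> \<tau>" "0 < \<eta>"
  obtains x y where "lp_feasible V E \<tau> x y" "(\<Sum>v\<in>V. x v) < - Q_LP V E \<tau> + \<eta>"
proof -
  let ?S = "{- (\<Sum>v\<in>V. x v) | x y. lp_feasible V E \<tau> x y}"
  have "?S \<noteq> {}"
    using lp_feasible_ones[OF assms(1)] by blast
  moreover have "Q_LP V E \<tau> - \<eta> < Sup ?S"
    using assms(2) by (simp add: Q_LP_def)
  ultimately obtain q where "q \<in> ?S" "Q_LP V E \<tau> - \<eta> < q"
    by (meson less_cSupD)
  then show ?thesis
    using that by force
qed

lemma Q_LP_eq_0:
  assumes G: "simple_graph V E" and \<tau>: "real (max_deg V E) \<le> \<tau>"
  shows "Q_LP V E \<tau> = 0"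
proof -
  have "lp_feasible V E \<tau> (\<lambda>_. 0) (\<lambda>_. 1)"
    using vdeg_le_max_deg[OF G] \<tau> by (fastforce simp: lp_feasible_def vdeg_def)
  then have "0 \<le> Q_LP V E \<tau>"
    using Q_LP_upper by fastforce
  moreover have "Q_LP V E \<tau> \<le> 0"
    using \<tau> by (intro Q_LP_nonpos) linarith
  ultimately show ?thesis
    by linarith
qed

lemma N_ge_le_abs_Q_LP:
  assumes G: "simple_graph V E" and \<tau>: "0 \<le> \<tau>"
    and t: "3 * \<tau> + 3 * \<bar>Q_LP V E \<tau>\<bar> + 1 \<le> t"
  shows "real (N_ge V E t) \<le> 3 * \<bar>Q_LP V E \<tau>\<bar>"
proof (rule field_le_epsilon)
  fix \<eta> :: real assume "0 < \<eta>"
  then have "0 < min (\<eta> / 3) (1 / 3)"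
    by simp
  then obtain x y where feas: "lp_feasible V E \<tau> x y"
    and x: "(\<Sum>v\<in>V. x v) < - Q_LP V E \<tau> + min (\<eta> / 3) (1 / 3)"
    by (rule Q_LP_approx[OF \<tau>])
  have Q: "\<bar>Q_LP V E \<tau>\<bar> = - Q_LP V E \<tau>"
    by (rule abs_of_nonpos[OF Q_LP_nonpos[OF \<tau>]])
  have "3 * (\<tau> + (\<Sum>v\<in>V. x v)) < t"
    unfolding distrib_left using x t Q min.cobounded2[of "\<eta> / 3" "1 / 3"] by linarith
  then have "real (N_ge V E t) \<le> 3 * (\<Sum>v\<in>V. x v)"
    by (rule N_ge_le_lp_feasible[OF G feas])
  then show "real (N_ge V E t) \<le> 3 * \<bar>Q_LP V E \<tau>\<bar> + \<eta>"
    using x Q min.cobounded1[of "\<eta> / 3" "1 / 3"] by linarith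
qed

section \<open>Tails of the Laplace distribution\<close>

lemma nn_integral_laplace_density_atLeast:
  fixes a b :: real
  assumes b: "0 < b" and a: "0 \<le> a"
  shows "(\<integral>\<^sup>+x. laplace_density b x * indicator {a..} x \<partial>lborel) = ennreal (exp (- a / b) / 2)"
proof -
  have "(\<integral>\<^sup>+x. laplace_density b x * indicator {a..} x \<partial>lborel)
      = (\<integral>\<^sup>+x. ennreal (exp (- x / b) / (2 * b)) * indicator {a..} x \<partial>lborel)"
    using a by (intro nn_integral_cong) (auto simp: laplace_density_def split: split_indicator)
  also have "\<dots> = ennreal (0 - (- exp (- a / b) / 2))"
  proof (rule nn_integral_FTC_atLeast)
    show "((\<lambda>x::real. - exp (- x / b) / 2) \<longlongrightarrow> 0) at_top"
      using b by real_asymp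
  qed (use b in \<open>auto intro!: derivative_eq_intros simp: field_simps\<close>)
  finally show ?thesis
    by simp
qed

lemma nn_integral_laplace_density_atMost:
  fixes a b :: real
  assumes "0 < b" "0 \<le> a"
  shows "(\<integral>\<^sup>+x. laplace_density b x * indicator {..- a} x \<partial>lborel) = ennreal (exp (- a / b) / 2)"
proof -
  have "(\<integral>\<^sup>+x. laplace_density b x * indicator {..- a} x \<partial>lborel)
      = (\<integral>\<^sup>+x. laplace_density b x * indicator {..- a} x \<partial>distr lborel borel uminus)"
    by (simp add: lborel_distr_uminus)
  also have "\<dots> = (\<integral>\<^sup>+x. laplace_density b x * indicator {a..} x \<partial>lborel)"
    by (subst nn_integral_distr) (auto simp: laplace_density_def indicator_def)
  finally show ?thesis
    using nn_integral_laplace_density_atLeast[OF assms] by simp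
qed

lemma laplace_prob_ge:
  assumes Y: "distributed M lborel Y (laplace_density b)" and b: "0 < b" and r: "1 \<le> r"
  shows "measure M {\<omega>\<in>space M. b * ln r \<le> Y \<omega>} = 1 / (2 * r)"
proof -
  have "{\<omega>\<in>space M. b * ln r \<le> Y \<omega>} = Y -` {b * ln r..} \<inter> space M"
    by auto
  moreover have "exp (- (b * ln r) / b) / 2 = 1 / (2 * r)"
    using b r by (simp add: exp_minus inverse_eq_divide)
  ultimately show ?thesis
    using distributed_emeasure[OF Y, of "{b * ln r..}"] b r
    by (simp add: measure_def nn_integral_laplace_density_atLeast)
qed

lemma laplace_prob_le_neg:
  assumes Y: "distributed M lborel Y (laplace_density b)" and b: "0 < b" and r: "1 \<le> r"
  shows "measure M {\<omega>\<in>space M. Y \<omega> \<le> - (b * ln r)} = 1 / (2 * r)"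
proof -
  have "{\<omega>\<in>space M. Y \<omega> \<le> - (b * ln r)} = Y -` {..- (b * ln r)} \<inter> space M"
    by auto
  moreover have "exp (- (b * ln r) / b) / 2 = 1 / (2 * r)"
    using b r by (simp add: exp_minus inverse_eq_divide)
  ultimately show ?thesis
    using distributed_emeasure[OF Y, of "{..- (b * ln r)}"] b r
    by (simp add: measure_def nn_integral_laplace_density_atMost)
qed

lemma laplace_prob_abs_ge:
  assumes Y: "distributed M lborel Y (laplace_density b)" and b: "0 < b" and r: "1 \<le> r"
  shows "measure M {\<omega>\<in>space M. b * ln r \<le> \<bar>Y \<omega>\<bar>} \<le> 1 / r"
proof -
  have [measurable]: "Y \<in> borel_measurable M"
    using distributed_measurable[OF Y] by simp
  have "{\<omega>\<in>space M. b * ln r \<le> \<bar>Y \<omega>\<bar>}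
      = {\<omega>\<in>space M. b * ln r \<le> Y \<omega>} \<union> {\<omega>\<in>space M. Y \<omega> \<le> - (b * ln r)}"
    by auto
  also have "measure M \<dots> \<le> measure M {\<omega>\<in>space M. b * ln r \<le> Y \<omega>}
      + measure M {\<omega>\<in>space M. Y \<omega> \<le> - (b * ln r)}"
    by (rule measure_Un_le) measurable
  also have "\<dots> = 1 / r"
    using laplace_prob_ge[OF Y b r] laplace_prob_le_neg[OF Y b r] by simp
  finally show ?thesis .
qed

section \<open>The noisy doubling search\<close>

lemma exists_pow2_bracket:
  fixes D :: real
  assumes "1 \<le> D"
  obtains k where "D \<le> 2 ^ k" "2 ^ k < 2 * D"
proof -
  obtain n where n: "D < 2 ^ n"
    using real_arch_pow[of 2 D] by auto
  define k where "k = (LEAST k. D \<le> 2 ^ k)"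
  have "D \<le> 2 ^ k"
    unfolding k_def by (rule LeastI[of _ n]) (use n in linarith)
  moreover have "2 ^ k < 2 * D"
  proof (cases k)
    case 0
    then show ?thesis
      using assms by simp
  next
    case (Suc m)
    then have "\<not> D \<le> 2 ^ m"
      using not_less_Least[of m "\<lambda>k. D \<le> 2 ^ k"] unfolding k_def by simp
    then show ?thesis
      using Suc by simp
  qed
  ultimately show ?thesis
    using that by blast
qed

lemma alg_stops_at_le_passes:
  assumes "alg_passes V E \<epsilon> \<beta> z k"
  obtains k' where "alg_stops_at V E \<epsilon> \<beta> z k'" "k' \<le> k"
proof
  let ?k = "LEAST k. alg_passes V E \<epsilon> \<beta> z k"
  show "alg_stops_at V E \<epsilon> \<beta> z ?k"
    unfolding alg_stops_at_def using LeastI[where P = "alg_passes V E \<epsilon> \<beta> z", OF assms] not_less_Least by blast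
  show "?k \<le> k"
    using assms by (rule Least_le)
qed

lemma alg_passes_if_max_deg_le:
  assumes "simple_graph V E" "real (max_deg V E) \<le> 2 ^ k" "alg_T \<epsilon> \<beta> + z NT < z (NQ k)"
  shows "alg_passes V E \<epsilon> \<beta> z k"
  using assms by (simp add: alg_passes_def Q_LP_eq_0)

lemma alg_output_ge:
  assumes "0 < \<epsilon>" "0 < r" "r \<le> max (1 / \<delta>) (2 / \<beta>)" "- (6 / \<epsilon> * ln r) \<le> z NF"
  shows "3 * 2 ^ k + 3 * \<bar>Q_LP V E (2 ^ k)\<bar> + 1 \<le> alg_output V E \<epsilon> \<beta> \<delta> z k"
proof -
  have "6 / \<epsilon> * ln r \<le> 6 / \<epsilon> * ln (max (1 / \<delta>) (2 / \<beta>))"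
    using assms by (intro mult_left_mono) auto
  with assms(4) show ?thesis
    by (simp add: alg_output_def)
qed

lemma N_ge_alg_output_le_abs_Q_LP:
  assumes "simple_graph V E" "0 < \<epsilon>" "0 < r" "r \<le> max (1 / \<delta>) (2 / \<beta>)" "- (6 / \<epsilon> * ln r) \<le> z NF"
  shows "real (N_ge V E (alg_output V E \<epsilon> \<beta> \<delta> z k)) \<le> 3 * \<bar>Q_LP V E (2 ^ k)\<bar>"
proof (rule N_ge_le_abs_Q_LP[OF assms(1)])
  show "3 * 2 ^ k + 3 * \<bar>Q_LP V E (2 ^ k)\<bar> + 1 \<le> alg_output V E \<epsilon> \<beta> \<delta> z k"
    using assms(2-) by (rule alg_output_ge)
qed simp

lemma alg_output_accurate:
  fixes V :: "'a set" and E :: "'a set set" and z :: "noise_idx \<Rightarrow> real"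
  defines "D \<equiv> real (max_deg V E)"
  assumes G: "simple_graph V E" and D: "1 \<le> D" and \<epsilon>: "0 < \<epsilon>" and \<beta>: "0 < \<beta>"
    and pass: "alg_passes V E \<epsilon> \<beta> z k" and k: "2 ^ k < 2 * D"
    and NT: "- (4 / \<epsilon> * ln (4 / \<beta>)) \<le> z NT"
    and NQ: "z (NQ k) < 4 / \<epsilon> * ln (4 * log 2 (4 * D) / \<beta>)"
    and NF: "\<bar>z NF\<bar> \<le> 6 / \<epsilon> * ln (2 / \<beta>)"
  shows "alg_output V E \<epsilon> \<beta> \<delta> z k \<le> 6 * D + 24 / \<epsilon> * ln (log 2 (4 * D))
           + 48 / \<epsilon> * ln (4 / \<beta>) + 12 / \<epsilon> * ln (max (1 / \<delta>) (2 / \<beta>)) + 1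
       \<and> real (N_ge V E (alg_output V E \<epsilon> \<beta> \<delta> z k))
           \<le> 24 / \<epsilon> * ln (log 2 (4 * D)) + 48 / \<epsilon> * ln (4 / \<beta>)"
proof -
  define L where "L = log 2 (4 * D)"
  define Q where "Q = Q_LP V E (2 ^ k)"
  define a where "a = ln (4 / \<beta>) / \<epsilon>"
  define l where "l = ln L / \<epsilon>"
  have L: "1 \<le> L"
    using D by (simp add: L_def)
  have "0 \<le> l"
    using L \<epsilon> by (simp add: l_def)
  have "ln (4 * L / \<beta>) = ln L + ln (4 / \<beta>)"
    using L \<beta> by (simp add: ln_mult ln_div)
  then have "4 / \<epsilon> * ln (4 * L / \<beta>) = 4 * l + 4 * a"
    by (simp add: a_def l_def distrib_left)
  then have "z (NQ k) < 4 * l + 4 * a"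
    using NQ by (simp add: L_def)
  moreover have "- 8 * a + z NT < Q + z (NQ k)" "- 4 * a \<le> z NT"
    using pass NT by (simp_all add: alg_passes_def alg_T_def Q_def a_def)
  moreover have "Q \<le> 0"
    unfolding Q_def by (rule Q_LP_nonpos) simp
  ultimately have Q: "3 * \<bar>Q\<bar> \<le> 24 * l + 48 * a"
    using \<open>0 \<le> l\<close> by linarith
  have "real (N_ge V E (alg_output V E \<epsilon> \<beta> \<delta> z k)) \<le> 3 * \<bar>Q\<bar>"
    unfolding Q_def using NF \<beta> by (intro N_ge_alg_output_le_abs_Q_LP[OF G \<epsilon>, of "2 / \<beta>"]) auto
  moreover have "6 / \<epsilon> * ln (2 / \<beta>) \<le> 6 / \<epsilon> * ln (max (1 / \<delta>) (2 / \<beta>))"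
    using \<epsilon> \<beta> by (intro mult_left_mono) (auto simp: ln_le_cancel_iff less_max_iff_disj)
  moreover have "24 / \<epsilon> * ln L = 24 * l" "48 / \<epsilon> * ln (4 / \<beta>) = 48 * a"
    by (simp_all add: a_def l_def)
  ultimately show ?thesis
    using Q k NF by (auto simp: alg_output_def Q_def L_def)
qed

lemma alg_output_accurate_if_noise_within_tails:
  fixes V :: "'a set" and E :: "'a set set" and z :: "noise_idx \<Rightarrow> real"
  defines "D \<equiv> real (max_deg V E)"
  assumes G: "simple_graph V E" and D: "1 \<le> D" and \<epsilon>: "0 < \<epsilon>" and \<beta>: "0 < \<beta>"
    and k0: "D \<le> 2 ^ k0" "2 ^ k0 < 2 * D"
    and NT: "\<bar>z NT\<bar> < 4 / \<epsilon> * ln (4 / \<beta>)"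
    and NQ0: "- (4 / \<epsilon> * ln (4 / \<beta>)) < z (NQ k0)"
    and NQ: "\<forall>j\<le>k0. z (NQ j) < 4 / \<epsilon> * ln (4 * log 2 (4 * D) / \<beta>)"
    and NF: "\<bar>z NF\<bar> < 6 / \<epsilon> * ln (2 / \<beta>)"
  shows "\<exists>k. alg_stops_at V E \<epsilon> \<beta> z k \<and>
           (let t = alg_output V E \<epsilon> \<beta> \<delta> z k in
              t \<le> 6 * D + 24 / \<epsilon> * ln (log 2 (4 * D))
                     + 48 / \<epsilon> * ln (4 / \<beta>) + 12 / \<epsilon> * ln (max (1 / \<delta>) (2 / \<beta>)) + 1
            \<and> real (N_ge V E t) \<le> 24 / \<epsilon> * ln (log 2 (4 * D)) + 48 / \<epsilon> * ln (4 / \<beta>))"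
proof -
  have "alg_T \<epsilon> \<beta> = - 2 * (4 / \<epsilon> * ln (4 / \<beta>))"
    by (simp add: alg_T_def)
  then have "alg_passes V E \<epsilon> \<beta> z k0"
    using NT NQ0 k0 unfolding D_def by (intro alg_passes_if_max_deg_le[OF G]) auto
  then obtain k where stop: "alg_stops_at V E \<epsilon> \<beta> z k" and "k \<le> k0"
    by (rule alg_stops_at_le_passes)
  have "(2::real) ^ k \<le> 2 ^ k0"
    using \<open>k \<le> k0\<close> by (rule power_increasing) simp
  then have "2 ^ k < 2 * D"
    using k0 by linarith
  moreover have "alg_passes V E \<epsilon> \<beta> z k"
    using stop by (simp add: alg_stops_at_def)
  moreover have "z (NQ k) < 4 / \<epsilon> * ln (4 * log 2 (4 * D) / \<beta>)"
    using NQ \<open>k \<le> k0\<close> by blast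
  moreover have "- (4 / \<epsilon> * ln (4 / \<beta>)) \<le> z NT" "\<bar>z NF\<bar> \<le> 6 / \<epsilon> * ln (2 / \<beta>)"
    using NT NF by linarith+
  ultimately have "alg_output V E \<epsilon> \<beta> \<delta> z k \<le> 6 * D + 24 / \<epsilon> * ln (log 2 (4 * D))
           + 48 / \<epsilon> * ln (4 / \<beta>) + 12 / \<epsilon> * ln (max (1 / \<delta>) (2 / \<beta>)) + 1
       \<and> real (N_ge V E (alg_output V E \<epsilon> \<beta> \<delta> z k))
           \<le> 24 / \<epsilon> * ln (log 2 (4 * D)) + 48 / \<epsilon> * ln (4 / \<beta>)"
    using D unfolding D_def by (intro alg_output_accurate[OF G _ \<epsilon> \<beta>])
  with stop show ?thesis
    unfolding Let_def by blast
qed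

lemma alg_output_plus_N_ge_le:
  assumes G: "simple_graph V E" and \<epsilon>: "0 < \<epsilon>" and \<delta>: "0 < \<delta>"
    and NF: "- (6 / \<epsilon> * ln (1 / \<delta>)) \<le> z NF"
  shows "let t = alg_output V E \<epsilon> \<beta> \<delta> z k in t + real (N_ge V E t) \<le> 2 * t"
proof -
  have r: "0 < 1 / \<delta>" "1 / \<delta> \<le> max (1 / \<delta>) (2 / \<beta>)"
    using \<delta> by auto
  have "3 * 2 ^ k + 3 * \<bar>Q_LP V E (2 ^ k)\<bar> + 1 \<le> alg_output V E \<epsilon> \<beta> \<delta> z k"
    using \<epsilon> r NF by (rule alg_output_ge)
  moreover have "real (N_ge V E (alg_output V E \<epsilon> \<beta> \<delta> z k)) \<le> 3 * \<bar>Q_LP V E (2 ^ k)\<bar>"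
    using G \<epsilon> r NF by (rule N_ge_alg_output_le_abs_Q_LP)
  moreover have "(0::real) \<le> 2 ^ k"
    by simp
  ultimately show ?thesis
    unfolding Let_def by linarith
qed

section \<open>Probability bounds\<close>

lemma (in prob_space) prob_ge_if_compl_subset:
  assumes "A \<in> events" "B \<in> events" "space M - B \<subseteq> A" "prob B \<le> \<gamma>"
  shows "1 - \<gamma> \<le> prob A"
  using finite_measure_mono[OF assms(3,1)] prob_compl[OF assms(2)] assms(4) by linarith

lemma (in prob_space) indep_vars_prob_all_less_small:
  fixes X :: "'i \<Rightarrow> 'a \<Rightarrow> real" and f :: "nat \<Rightarrow> 'i"
  assumes indep: "indep_vars (\<lambda>_. borel) X UNIV" and f: "inj f"
    and p: "\<And>j. prob {\<omega>\<in>space M. X (f j) \<omega> < c} \<le> p" and "p < 1" and "0 < \<gamma>"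
  obtains n where "prob {\<omega>\<in>space M. \<forall>j<n. X (f j) \<omega> < c} < \<gamma>"
proof -
  obtain n where n: "p ^ n < \<gamma>"
    using real_arch_pow_inv[OF \<open>0 < \<gamma>\<close> \<open>p < 1\<close>] by blast
  let ?J = "f ` {..<Suc n}"
  have "0 \<le> p"
    using p[of 0] measure_nonneg[of M] by (rule order.trans[rotated])
  have "{\<omega>\<in>space M. \<forall>j<Suc n. X (f j) \<omega> < c} = (\<Inter>i\<in>?J. X i -` {..<c} \<inter> space M)"
    by auto
  also have "prob \<dots> = (\<Prod>i\<in>?J. prob (X i -` {..<c} \<inter> space M))"
    using indep by (rule indep_varsD) auto
  also have "\<dots> \<le> (\<Prod>i\<in>?J. p)"
  proof (rule prod_mono)
    fix i assume "i \<in> ?J"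
    then obtain j where "i = f j"
      by blast
    moreover have "X (f j) -` {..<c} \<inter> space M = {\<omega>\<in>space M. X (f j) \<omega> < c}"
      by auto
    ultimately show "0 \<le> prob (X i -` {..<c} \<inter> space M) \<and> prob (X i -` {..<c} \<inter> space M) \<le> p"
      using p[of j] by simp
  qed
  also have "\<dots> = p ^ Suc n"
    using card_image[OF inj_on_subset[OF f]] by simp
  also have "\<dots> \<le> p ^ n"
    using \<open>0 \<le> p\<close> \<open>p < 1\<close> by (simp add: mult_left_le_one_le)
  finally show ?thesis
    using n that[of "Suc n"] by linarith
qed

locale noisy_threshold_search = prob_space M
  for M :: "'w measure" +
  fixes V :: "'a set" and E :: "'a set set" and X :: "noise_idx \<Rightarrow> 'w \<Rightarrow> real"
    and \<epsilon> \<beta> \<delta> :: real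
  assumes eps: "0 < \<epsilon>" and beta: "0 < \<beta>" "\<beta> < 1" and delta: "0 < \<delta>" "\<delta> < 1"
    and graph: "simple_graph V E" "E \<noteq> {}"
    and indep: "indep_vars (\<lambda>_. borel) X UNIV"
    and lapT: "distributed M lborel (X NT) (laplace_density (4 / \<epsilon>))"
    and lapQ: "\<And>k. distributed M lborel (X (NQ k)) (laplace_density (4 / \<epsilon>))"
    and lapF: "distributed M lborel (X NF) (laplace_density (6 / \<epsilon>))"
begin

lemma borel_measurable_noise [measurable]: "X i \<in> borel_measurable M"
  using indep by (simp add: indep_vars_def2)

lemma borel_measurable_N_ge [measurable]: "(\<lambda>t. real (N_ge V E t)) \<in> borel_measurable borel"
proof -
  have "real (N_ge V E t) = (\<Sum>v\<in>V. if t \<le> real (vdeg E v) then 1 else 0)" for t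
    using simple_graph_finite_vertices[OF graph(1)] by (simp add: N_ge_def sum.If_cases Int_def)
  then show ?thesis
    by simp
qed

definition noise_within_tails :: "nat \<Rightarrow> real \<Rightarrow> 'w set" where
  "noise_within_tails k0 L = {\<omega>\<in>space M. \<bar>X NT \<omega>\<bar> < 4 / \<epsilon> * ln (4 / \<beta>)
      \<and> - (4 / \<epsilon> * ln (4 / \<beta>)) < X (NQ k0) \<omega>
      \<and> (\<forall>j\<le>k0. X (NQ j) \<omega> < 4 / \<epsilon> * ln (4 * L / \<beta>))
      \<and> \<bar>X NF \<omega>\<bar> < 6 / \<epsilon> * ln (2 / \<beta>)}"

lemma prob_noise_within_tails:
  assumes L: "real (k0 + 1) \<le> L"
  shows "1 - \<beta> \<le> prob (noise_within_tails k0 L)"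
proof -
  define B1 where "B1 = {\<omega>\<in>space M. 4 / \<epsilon> * ln (4 / \<beta>) \<le> \<bar>X NT \<omega>\<bar>}"
  define B2 where "B2 = {\<omega>\<in>space M. X (NQ k0) \<omega> \<le> - (4 / \<epsilon> * ln (4 / \<beta>))}"
  define B3 where "B3 = (\<Union>j\<le>k0. {\<omega>\<in>space M. 4 / \<epsilon> * ln (4 * L / \<beta>) \<le> X (NQ j) \<omega>})"
  define B4 where "B4 = {\<omega>\<in>space M. 6 / \<epsilon> * ln (2 / \<beta>) \<le> \<bar>X NF \<omega>\<bar>}"
  have events: "B1 \<in> events" "B2 \<in> events" "B3 \<in> events" "B4 \<in> events"
    unfolding B1_def B2_def B3_def B4_def by measurable
  have b: "0 < 4 / \<epsilon>" "0 < 6 / \<epsilon>"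
    using eps by auto
  have "prob B3 \<le> (\<Sum>j\<le>k0. prob {\<omega>\<in>space M. 4 / \<epsilon> * ln (4 * L / \<beta>) \<le> X (NQ j) \<omega>})"
    unfolding B3_def by (rule measure_UNION_le) auto
  also have "\<dots> = real (k0 + 1) * (\<beta> / (8 * L))"
    using laplace_prob_ge[OF lapQ b(1), of "4 * L / \<beta>"] L beta by simp
  also have "\<dots> \<le> L * (\<beta> / (8 * L))"
    using L beta by (intro mult_right_mono) auto
  finally have "prob B3 \<le> \<beta> / 8"
    using L by simp
  moreover have "prob B1 \<le> \<beta> / 4"
    using laplace_prob_abs_ge[OF lapT b(1), of "4 / \<beta>"] beta by (simp add: B1_def)
  moreover have "prob B2 = \<beta> / 8"
    using laplace_prob_le_neg[OF lapQ b(1), of "4 / \<beta>"] beta by (simp add: B2_def)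
  moreover have "prob B4 \<le> \<beta> / 2"
    using laplace_prob_abs_ge[OF lapF b(2), of "2 / \<beta>"] beta by (simp add: B4_def)
  moreover have "prob (B1 \<union> B2 \<union> B3 \<union> B4) \<le> prob B1 + prob B2 + prob B3 + prob B4"
    using measure_Un_le[of "B1 \<union> B2 \<union> B3" M B4] measure_Un_le[of "B1 \<union> B2" M B3]
      measure_Un_le[of B1 M B2] events by auto
  ultimately have "prob (B1 \<union> B2 \<union> B3 \<union> B4) \<le> \<beta>"
    by linarith
  moreover have "space M - (B1 \<union> B2 \<union> B3 \<union> B4) \<subseteq> noise_within_tails k0 L"
    by (auto simp: noise_within_tails_def B1_def B2_def B3_def B4_def not_le)
  moreover have "noise_within_tails k0 L \<in> events"
    unfolding noise_within_tails_def by measurable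
  ultimately show ?thesis
    using events by (intro prob_ge_if_compl_subset) auto
qed

lemma prob_alg_output_accurate:
  "1 - \<beta> \<le> prob {\<omega>\<in>space M. \<exists>k. alg_stops_at V E \<epsilon> \<beta> (\<lambda>i. X i \<omega>) k \<and>
      (let t = alg_output V E \<epsilon> \<beta> \<delta> (\<lambda>i. X i \<omega>) k in
         t \<le> 6 * real (max_deg V E) + 24 / \<epsilon> * ln (log 2 (4 * real (max_deg V E)))
                + 48 / \<epsilon> * ln (4 / \<beta>) + 12 / \<epsilon> * ln (max (1 / \<delta>) (2 / \<beta>)) + 1
       \<and> real (N_ge V E t) \<le> 24 / \<epsilon> * ln (log 2 (4 * real (max_deg V E)))
                + 48 / \<epsilon> * ln (4 / \<beta>))}"
  (is "_ \<le> prob ?A")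
proof -
  let ?D = "real (max_deg V E)"
  have D: "1 \<le> ?D"
    using max_deg_pos[OF graph] by simp
  obtain k0 where k0: "?D \<le> 2 ^ k0" "2 ^ k0 < 2 * ?D"
    using exists_pow2_bracket[OF D] by blast
  have "2 powr real (k0 + 1) = 2 ^ (k0 + 1)"
    by (rule powr_realpow) simp
  also have "\<dots> < 4 * ?D"
    using k0 by simp
  finally have "real (k0 + 1) < log 2 (4 * ?D)"
    using D by (subst less_log_iff) auto
  note good = prob_noise_within_tails[OF less_imp_le[OF this]]
  have "noise_within_tails k0 (log 2 (4 * ?D)) \<subseteq> ?A"
  proof
    fix \<omega> assume "\<omega> \<in> noise_within_tails k0 (log 2 (4 * ?D))"
    then have "\<omega> \<in> space M" and noise: "\<bar>X NT \<omega>\<bar> < 4 / \<epsilon> * ln (4 / \<beta>)"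
      "- (4 / \<epsilon> * ln (4 / \<beta>)) < X (NQ k0) \<omega>"
      "\<forall>j\<le>k0. X (NQ j) \<omega> < 4 / \<epsilon> * ln (4 * log 2 (4 * ?D) / \<beta>)"
      "\<bar>X NF \<omega>\<bar> < 6 / \<epsilon> * ln (2 / \<beta>)"
      by (simp_all add: noise_within_tails_def)
    with alg_output_accurate_if_noise_within_tails[where z = "\<lambda>i. X i \<omega>" and \<delta> = \<delta>, OF graph(1) D eps beta(1) k0]
    show "\<omega> \<in> ?A"
      by blast
  qed
  moreover have "?A \<in> events"
    unfolding alg_stops_at_def alg_passes_def alg_output_def Let_def by measurable
  ultimately have "prob (noise_within_tails k0 (log 2 (4 * ?D))) \<le> prob ?A"
    by (rule finite_measure_mono)
  with good show ?thesis
    by linarith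
qed

lemma prob_queries_all_below_small:
  assumes "1 \<le> r" "0 < \<gamma>"
  obtains n where "prob {\<omega>\<in>space M. \<forall>j<n. X (NQ (k0 + j)) \<omega> < 4 / \<epsilon> * ln r} < \<gamma>"
proof (rule indep_vars_prob_all_less_small[OF indep])
  show "inj (\<lambda>j. NQ (k0 + j))"
    by (simp add: inj_def)
  fix j
  have "{\<omega>\<in>space M. X (NQ (k0 + j)) \<omega> < 4 / \<epsilon> * ln r}
      = space M - {\<omega>\<in>space M. 4 / \<epsilon> * ln r \<le> X (NQ (k0 + j)) \<omega>}"
    by auto
  moreover have "prob {\<omega>\<in>space M. 4 / \<epsilon> * ln r \<le> X (NQ (k0 + j)) \<omega>} = 1 / (2 * r)"
    using laplace_prob_ge[OF lapQ _ assms(1)] eps by simp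
  ultimately show "prob {\<omega>\<in>space M. X (NQ (k0 + j)) \<omega> < 4 / \<epsilon> * ln r} \<le> 1 - 1 / (2 * r)"
    by (simp add: prob_compl)
qed (use assms in auto)

lemma prob_alg_passes_some:
  "1 - \<delta> / 2 \<le> prob {\<omega>\<in>space M. \<exists>k. alg_passes V E \<epsilon> \<beta> (\<lambda>i. X i \<omega>) k}"
  (is "_ \<le> prob ?P")
proof -
  obtain k0 where k0: "real (max_deg V E) \<le> 2 ^ k0"
    using exists_pow2_bracket[of "real (max_deg V E)"] max_deg_pos[OF graph] by force
  define c where "c = 4 / \<epsilon> * ln (4 / \<delta>)"
  have "1 \<le> 4 / \<delta>" "0 < 3 * \<delta> / 8"
    using delta by auto
  then obtain n where n: "prob {\<omega>\<in>space M. \<forall>j<n. X (NQ (k0 + j)) \<omega> < c} < 3 * \<delta> / 8"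
    unfolding c_def by (rule prob_queries_all_below_small)
  define C1 where "C1 = {\<omega>\<in>space M. c \<le> X NT \<omega>}"
  define C2 where "C2 = {\<omega>\<in>space M. \<forall>j<n. X (NQ (k0 + j)) \<omega> < c}"
  have events: "C1 \<in> events" "C2 \<in> events"
    unfolding C1_def C2_def by measurable
  have "prob C1 = \<delta> / 8"
    using laplace_prob_ge[OF lapT _, of "4 / \<delta>"] eps delta by (simp add: C1_def c_def)
  then have "prob (C1 \<union> C2) \<le> \<delta> / 2"
    using measure_Un_le[of C1 M C2] events n by (simp add: C2_def)
  moreover have "space M - (C1 \<union> C2) \<subseteq> ?P"
  proof
    fix \<omega> assume \<omega>: "\<omega> \<in> space M - (C1 \<union> C2)"
    then obtain j where "X NT \<omega> < c" "c \<le> X (NQ (k0 + j)) \<omega>"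
      by (auto simp: C1_def C2_def not_less)
    moreover have "alg_T \<epsilon> \<beta> \<le> 0"
      using eps beta by (simp add: alg_T_def)
    moreover have "(2::real) ^ k0 \<le> 2 ^ (k0 + j)"
      by (rule power_increasing) simp_all
    then have "real (max_deg V E) \<le> 2 ^ (k0 + j)"
      using k0 by linarith
    ultimately have "alg_passes V E \<epsilon> \<beta> (\<lambda>i. X i \<omega>) (k0 + j)"
      by (intro alg_passes_if_max_deg_le[OF graph(1)]) auto
    with \<omega> show "\<omega> \<in> ?P"
      by blast
  qed
  moreover have "?P \<in> events"
    unfolding alg_passes_def by measurable
  ultimately show ?thesis
    using events by (intro prob_ge_if_compl_subset) auto
qed

lemma prob_alg_output_plus_N_ge_le:
  "1 - \<delta> \<le> prob {\<omega>\<in>space M. \<exists>k. alg_stops_at V E \<epsilon> \<beta> (\<lambda>i. X i \<omega>) k \<and>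
      (let t = alg_output V E \<epsilon> \<beta> \<delta> (\<lambda>i. X i \<omega>) k in t + real (N_ge V E t) \<le> 2 * t)}"
  (is "_ \<le> prob ?A")
proof -
  define P where "P = {\<omega>\<in>space M. \<exists>k. alg_passes V E \<epsilon> \<beta> (\<lambda>i. X i \<omega>) k}"
  define C where "C = {\<omega>\<in>space M. X NF \<omega> \<le> - (6 / \<epsilon> * ln (1 / \<delta>))}"
  have events: "P \<in> events" "C \<in> events"
    unfolding P_def C_def alg_passes_def by measurable
  have "prob C = \<delta> / 2"
    using laplace_prob_le_neg[OF lapF _, of "1 / \<delta>"] eps delta by (simp add: C_def)
  moreover have "prob ((space M - P) \<union> C) \<le> prob (space M - P) + prob C"
    using events by (intro measure_Un_le) auto
  ultimately have "prob ((space M - P) \<union> C) \<le> \<delta>"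
    using prob_alg_passes_some events by (simp add: prob_compl P_def)
  moreover have "space M - ((space M - P) \<union> C) \<subseteq> ?A"
  proof
    fix \<omega> assume \<omega>: "\<omega> \<in> space M - ((space M - P) \<union> C)"
    then obtain k' where "alg_passes V E \<epsilon> \<beta> (\<lambda>i. X i \<omega>) k'"
      by (auto simp: P_def)
    then obtain k where "alg_stops_at V E \<epsilon> \<beta> (\<lambda>i. X i \<omega>) k"
      by (rule alg_stops_at_le_passes)
    moreover have "- (6 / \<epsilon> * ln (1 / \<delta>)) \<le> X NF \<omega>"
      using \<omega> by (auto simp: C_def)
    then have "let t = alg_output V E \<epsilon> \<beta> \<delta> (\<lambda>i. X i \<omega>) k in t + real (N_ge V E t) \<le> 2 * t"
      by (rule alg_output_plus_N_ge_le[OF graph(1) eps delta(1)])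
    ultimately show "\<omega> \<in> ?A"
      using \<omega> by blast
  qed
  moreover have "?A \<in> events"
    unfolding alg_stops_at_def alg_passes_def alg_output_def Let_def by measurable
  ultimately show ?thesis
    using events by (intro prob_ge_if_compl_subset) auto
qed

end

theorem mainTheorem8:
  fixes V :: "'a set" and E :: "'a set set"
    and M :: "'w measure" and X :: "noise_idx \<Rightarrow> 'w \<Rightarrow> real"
    and \<epsilon> \<beta> \<delta> :: real
  assumes eps: "\<epsilon> > 0"
    and beta: "0 < \<beta>" "\<beta> < 1"
    and delta: "0 < \<delta>" "\<delta> < 1"
    and G: "simple_graph V E" "E \<noteq> {}"
    and P: "prob_space M"
    and indep: "prob_space.indep_vars M (\<lambda>_. borel) X UNIV"
    and lapT: "distributed M lborel (X NT) (laplace_density (4 / \<epsilon>))"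
    and lapQ: "\<And>k. distributed M lborel (X (NQ k)) (laplace_density (4 / \<epsilon>))"
    and lapF: "distributed M lborel (X NF) (laplace_density (6 / \<epsilon>))"
  shows "measure M {\<omega>\<in>space M. \<exists>k. alg_stops_at V E \<epsilon> \<beta> (\<lambda>i. X i \<omega>) k \<and>
            (let t = alg_output V E \<epsilon> \<beta> \<delta> (\<lambda>i. X i \<omega>) k in
               t \<le> 6 * real (max_deg V E) + 24 / \<epsilon> * ln (log 2 (4 * real (max_deg V E)))
                      + 48 / \<epsilon> * ln (4 / \<beta>) + 12 / \<epsilon> * ln (max (1 / \<delta>) (2 / \<beta>)) + 1
             \<and> real (N_ge V E t) \<le> 24 / \<epsilon> * ln (log 2 (4 * real (max_deg V E)))
                      + 48 / \<epsilon> * ln (4 / \<beta>))} \<ge> 1 - \<beta>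
       \<and> measure M {\<omega>\<in>space M. \<exists>k. alg_stops_at V E \<epsilon> \<beta> (\<lambda>i. X i \<omega>) k \<and>
            (let t = alg_output V E \<epsilon> \<beta> \<delta> (\<lambda>i. X i \<omega>) k in
               t + real (N_ge V E t) \<le> 2 * t)} \<ge> 1 - \<delta>"
proof -
  interpret noisy_threshold_search M V E X \<epsilon> \<beta> \<delta>
    using assms by (simp add: noisy_threshold_search_def noisy_threshold_search_axioms_def)
  show ?thesis
    using prob_alg_output_accurate prob_alg_output_plus_N_ge_le by simp
qed

end
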